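(* Let $\Gamma$ be a connected fat-vertex graph associated to a reduced link diagram $D$. Then the Wirtinger number $\omega(\Gamma)$ is bounded above by the number of vertices of the plane dual graph $\Gamma^\ast$.
   Context: A reduced diagram is one without nugatory crossings. Fat-vertex graph: from $D$ and a checkerboard spanning surface $F$ (a union of disks and twisted bands), form the planar graph $\Gamma$ whose vertices are the disks of $F$, drawn as disjoint closed disks ("fat vertices"), and whose edges are the cores of the bands; $\Gamma^\ast$ is its plane dual graph (with one vertex per complementary region of $\Gamma$ in the plane, including the unbounded one). A segment of $\Gamma$ is either an edge or a connected arc of $\partial v\setminus\{\text{endpoints of edges}\}$ for a fat vertex $v$; let $S(\Gamma)$ be the set of segments ($m$ elements) and $e(\Gamma)$ the set of edges. For $A_1\subset A_2\subset S(\Gamma)$ with $A_2\setminus A_1=\{s\}$, a coloring move $A_1\to A_2$ is allowed if either (1) $s$ is an edge and both boundary segments adjacent to $s$ at one of its vertices are in $A_1$, or (2) $s$ is an arc in the boundary of a fat vertex and is incident to an edge in $A_1$. $\Gamma$ is $k$-colorable if there is a $k$-element set $A_0\subset S(\Gamma)\setminus e(\Gamma)$ and a sequence of $m-k$ coloring moves $A_0\to A_1\to\cdots\to A_{m-k}=S(\Gamma)$; the Wirtinger number $\omega(\Gamma)$ is the least such $k$. *)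

theory Defs
  imports Main
begin

text \<open>
  Combinatorial model of a planar fat-vertex graph (rotation system / combinatorial map).
  V: fat vertices; H: darts (edge-ends, i.e. endpoints of band cores on the disk boundaries);
  vert d: fat vertex at which dart d sits; alpha: the other end of the same edge
  (fixed-point-free involution on H); sigma: cyclic order of edge endpoints around the
  boundary circle of each fat vertex (one cycle per vertex having darts).
\<close>

definition fat_graph ::
  "'v set \<Rightarrow> 'd set \<Rightarrow> ('d \<Rightarrow> 'v) \<Rightarrow> ('d \<Rightarrow> 'd) \<Rightarrow> ('d \<Rightarrow> 'd) \<Rightarrow> bool" where
  "fat_graph V H vert alpha sigma \<longleftrightarrow>
     finite V \<and> finite H \<and> V \<noteq> {} \<and>
     (\<forall>d\<in>H. vert d \<in> V) \<and>
     (\<forall>d\<in>H. alpha d \<in> H \<and> alpha d \<noteq> d \<and> alpha (alpha d) = d) \<and>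
     bij_betw sigma H H \<and>
     (\<forall>d\<in>H. vert (sigma d) = vert d) \<and>
     (\<forall>d\<in>H. \<forall>d'\<in>H. vert d = vert d' \<longrightarrow> (\<exists>n. (sigma ^^ n) d = d'))"

definition fg_edges :: "'d set \<Rightarrow> ('d \<Rightarrow> 'd) \<Rightarrow> 'd set set" where
  "fg_edges H alpha = {{d, alpha d} | d. d \<in> H}"

definition fg_connected :: "'v set \<Rightarrow> 'd set \<Rightarrow> ('d \<Rightarrow> 'v) \<Rightarrow> ('d \<Rightarrow> 'd) \<Rightarrow> bool" where
  "fg_connected V H' vert alpha \<longleftrightarrow>
     (\<forall>u\<in>V. \<forall>w\<in>V. (u, w) \<in> {(vert d, vert (alpha d)) | d. d \<in> H'}\<^sup>*)"

text \<open>Faces (complementary regions) = orbits of sigma o alpha; a graph without edges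
  (a single fat vertex, when connected) has exactly one complementary region.\<close>
definition dual_vertices :: "'d set \<Rightarrow> ('d \<Rightarrow> 'd) \<Rightarrow> ('d \<Rightarrow> 'd) \<Rightarrow> 'd set set" where
  "dual_vertices H alpha sigma =
     (if H = {} then {{}} else {{((sigma \<circ> alpha) ^^ n) d | n. True} | d. d \<in> H})"

text \<open>Planarity (genus 0) of a connected rotation system: Euler's formula.\<close>
definition fg_plane :: "'v set \<Rightarrow> 'd set \<Rightarrow> ('d \<Rightarrow> 'd) \<Rightarrow> ('d \<Rightarrow> 'd) \<Rightarrow> bool" where
  "fg_plane V H alpha sigma \<longleftrightarrow>
     int (card V) - int (card (fg_edges H alpha)) + int (card (dual_vertices H alpha sigma)) = 2"

text \<open>Reducedness of D (no nugatory crossings) = no loop and no bridge in Gamma.\<close>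
definition fg_reduced :: "'v set \<Rightarrow> 'd set \<Rightarrow> ('d \<Rightarrow> 'v) \<Rightarrow> ('d \<Rightarrow> 'd) \<Rightarrow> bool" where
  "fg_reduced V H vert alpha \<longleftrightarrow>
     (\<forall>d\<in>H. vert (alpha d) \<noteq> vert d) \<and>
     (\<forall>d\<in>H. fg_connected V (H - {d, alpha d}) vert alpha)"

text \<open>Segments: edges, boundary arcs (Arc d = arc of the boundary circle of vert d from the
  endpoint of d to the endpoint of sigma d), and whole boundary circles of fat vertices
  without edge endpoints.\<close>
datatype ('v, 'd) segment = Edge "'d set" | Arc 'd | Circle 'v

definition segments ::
  "'v set \<Rightarrow> 'd set \<Rightarrow> ('d \<Rightarrow> 'v) \<Rightarrow> ('d \<Rightarrow> 'd) \<Rightarrow> ('v, 'd) segment set" where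
  "segments V H vert alpha =
     Edge ` fg_edges H alpha \<union> Arc ` H \<union> Circle ` {v \<in> V. \<forall>d\<in>H. vert d \<noteq> v}"

definition coloring_move ::
  "'d set \<Rightarrow> ('d \<Rightarrow> 'd) \<Rightarrow> ('d \<Rightarrow> 'd) \<Rightarrow> ('v, 'd) segment set \<Rightarrow> ('v, 'd) segment set \<Rightarrow> bool" where
  "coloring_move H alpha sigma A1 A2 \<longleftrightarrow>
     (\<exists>s. A1 \<subseteq> A2 \<and> A2 - A1 = {s} \<and>
       ((\<exists>d\<in>H. s = Edge {d, alpha d} \<and> Arc d \<in> A1 \<and> (\<exists>d'\<in>H. sigma d' = d \<and> Arc d' \<in> A1)) \<or>
        (\<exists>d\<in>H. s = Arc d \<and> (Edge {d, alpha d} \<in> A1 \<or> Edge {sigma d, alpha (sigma d)} \<in> A1))))"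

definition k_colorable ::
  "'v set \<Rightarrow> 'd set \<Rightarrow> ('d \<Rightarrow> 'v) \<Rightarrow> ('d \<Rightarrow> 'd) \<Rightarrow> ('d \<Rightarrow> 'd) \<Rightarrow> nat \<Rightarrow> bool" where
  "k_colorable V H vert alpha sigma k \<longleftrightarrow>
     (let S = segments V H vert alpha in
      \<exists>A0 f. A0 \<subseteq> S - Edge ` fg_edges H alpha \<and> card A0 = k \<and>
        f 0 = A0 \<and> f (card S - k) = S \<and>
        (\<forall>i < card S - k. coloring_move H alpha sigma (f i) (f (Suc i))))"

definition wirtinger_number ::
  "'v set \<Rightarrow> 'd set \<Rightarrow> ('d \<Rightarrow> 'v) \<Rightarrow> ('d \<Rightarrow> 'd) \<Rightarrow> ('d \<Rightarrow> 'd) \<Rightarrow> nat" where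
  "wirtinger_number V H vert alpha sigma = (LEAST k. k_colorable V H vert alpha sigma k)"

end

theory Submission
  imports Defs
begin

text \<open>The fat graph \<open>\<Gamma>\<close> of a reduced diagram has no bridge, so it has an ear decomposition:
  start with a cycle and repeatedly attach a path (an ear) whose two ends lie on what is
  already built. We colour along the way. A cycle is coloured from two seed arcs at a vertex.
  An ear with \<open>t + 1\<close> edges brings at most \<open>t\<close> new vertices and cuts some old boundary arcs;
  the old colouring can be replayed as soon as the cut arcs get coloured in full, and one new
  seed next to the ear arranges this. So \<open>|E| - |V| + 2\<close> seeds suffice, which by Euler's
  formula is the number of faces, i.e. of vertices of \<open>\<Gamma>\<^sup>*\<close>.\<close>

lemma funpow_add_apply: "(f ^^ (m + n)) x = (f ^^ m) ((f ^^ n) x)"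
  by (simp add: funpow_add)

lemma shortest_walk:
  assumes "(u, v) \<in> R\<^sup>*" "v \<in> T"
  obtains n f where "f 0 = u" "f n \<in> T" "\<forall>i<n. (f i, f (Suc i)) \<in> R"
    "\<forall>i<n. f i \<notin> T" "\<forall>i j. i < j \<longrightarrow> j \<le> n \<longrightarrow> f i \<noteq> f j"
proof -
  define reaches where "reaches n \<longleftrightarrow> (\<exists>v\<in>T. (u, v) \<in> R ^^ n)" for n
  have "\<exists>n. reaches n"
    using assms rtrancl_power unfolding reaches_def by blast
  define n where "n = (LEAST n. reaches n)"
  have shorter: "\<not> reaches m" if "m < n" for m
    using that not_less_Least unfolding n_def by blast
  have "reaches n"
    unfolding n_def by (rule LeastI_ex) fact
  then obtain f where f: "f 0 = u" "f n \<in> T" "\<forall>i<n. (f i, f (Suc i)) \<in> R"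
    unfolding reaches_def relpow_fun_conv by blast
  have part: "(f i, f j) \<in> R ^^ (j - i)" if "i \<le> j" "j \<le> n" for i j
  proof -
    have "(f (i + k), f (i + Suc k)) \<in> R" if "k < j - i" for k
      using f(3) that \<open>j \<le> n\<close> by simp
    then show ?thesis
      unfolding relpow_fun_conv using that by (intro exI[of _ "\<lambda>k. f (i + k)"]) simp
  qed
  have "f i \<notin> T" if "i < n" for i
    using shorter[OF that] part[of 0 i] that f(1) unfolding reaches_def by auto
  moreover have "f i \<noteq> f j" if "i < j" "j \<le> n" for i j
  proof
    assume "f i = f j"
    then have "(u, f n) \<in> R ^^ i O R ^^ (n - j)"
      using part[of 0 i] part[of j n] that f(1) by auto
    then have "reaches (i + (n - j))"
      using f(2) unfolding reaches_def relpow_add by blast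
    then show False
      using shorter that by simp
  qed
  ultimately show ?thesis
    using that f by blast
qed

locale rotation_system =
  fixes V :: "'v set" and H :: "'d set" and vert :: "'d \<Rightarrow> 'v"
    and alpha sigma :: "'d \<Rightarrow> 'd"
  assumes fat_graph: "fat_graph V H vert alpha sigma"
begin

lemma finite_H: "finite H"
  using fat_graph unfolding fat_graph_def by auto

lemma vert_in_V: "d \<in> H \<Longrightarrow> vert d \<in> V"
  using fat_graph unfolding fat_graph_def by auto

lemma alpha_in_H: "d \<in> H \<Longrightarrow> alpha d \<in> H"
  using fat_graph unfolding fat_graph_def by auto

lemma alpha_neq: "d \<in> H \<Longrightarrow> alpha d \<noteq> d"
  using fat_graph unfolding fat_graph_def by auto

lemma alpha_alpha: "d \<in> H \<Longrightarrow> alpha (alpha d) = d"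
  using fat_graph unfolding fat_graph_def by auto

lemma inj_on_sigma: "inj_on sigma H"
  using fat_graph unfolding fat_graph_def bij_betw_def by auto

lemma sigma_in_H: "d \<in> H \<Longrightarrow> sigma d \<in> H"
  using fat_graph unfolding fat_graph_def by (auto dest: bij_betwE)

lemma vert_sigma: "d \<in> H \<Longrightarrow> vert (sigma d) = vert d"
  using fat_graph unfolding fat_graph_def by auto

lemma funpow_sigma_in_H: "c \<in> H \<Longrightarrow> (sigma ^^ n) c \<in> H"
  by (induction n) (auto simp: sigma_in_H)

lemma vert_funpow_sigma: "c \<in> H \<Longrightarrow> vert ((sigma ^^ n) c) = vert c"
  by (induction n) (auto simp: vert_sigma funpow_sigma_in_H)

lemma funpow_sigma_inj:
  "c \<in> H \<Longrightarrow> c' \<in> H \<Longrightarrow> (sigma ^^ n) c = (sigma ^^ n) c' \<Longrightarrow> c = c'"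
proof (induction n)
  case (Suc n)
  then show ?case
    using inj_on_sigma funpow_sigma_in_H by (auto dest: inj_onD)
qed simp

lemma sigma_orbit_pos:
  assumes "c \<in> H" "d \<in> H" "vert d = vert c"
  shows "\<exists>n>0. (sigma ^^ n) c = d"
proof -
  obtain n where "(sigma ^^ n) (sigma c) = d"
    using fat_graph assms sigma_in_H vert_sigma unfolding fat_graph_def by metis
  then have "(sigma ^^ Suc n) c = d"
    by (simp add: funpow_swap1)
  then show ?thesis by blast
qed

text \<open>For a set of darts \<open>D\<close>, \<open>rot D\<close> is the rotation of the fat graph spanned by \<open>D\<close>:
  the first dart of \<open>D\<close> met when turning around the vertex by \<open>sigma\<close>.\<close>

definition rot_dist :: "'d set \<Rightarrow> 'd \<Rightarrow> nat" where
  "rot_dist D c = (LEAST n. 0 < n \<and> (sigma ^^ n) c \<in> D)"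

definition rot :: "'d set \<Rightarrow> 'd \<Rightarrow> 'd" where
  "rot D c = (sigma ^^ rot_dist D c) c"

lemma rot_dist_spec:
  assumes "D \<subseteq> H" "c \<in> H" "vert c \<in> vert ` D"
  shows "0 < rot_dist D c \<and> rot D c \<in> D"
proof -
  obtain d where "d \<in> D" "vert d = vert c"
    using assms(3) by auto
  then have "\<exists>n. 0 < n \<and> (sigma ^^ n) c \<in> D"
    using assms(1,2) sigma_orbit_pos[of c d] by auto
  then show ?thesis
    unfolding rot_dist_def rot_def by (rule LeastI_ex)
qed

lemma rot_in: "D \<subseteq> H \<Longrightarrow> c \<in> H \<Longrightarrow> vert c \<in> vert ` D \<Longrightarrow> rot D c \<in> D"
  using rot_dist_spec by blast

lemma rot_in_self: "D \<subseteq> H \<Longrightarrow> c \<in> D \<Longrightarrow> rot D c \<in> D"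
  using rot_in by blast

lemma rot_dist_pos: "D \<subseteq> H \<Longrightarrow> c \<in> H \<Longrightarrow> vert c \<in> vert ` D \<Longrightarrow> 0 < rot_dist D c"
  using rot_dist_spec by blast

lemma not_in_before_rot: "0 < m \<Longrightarrow> m < rot_dist D c \<Longrightarrow> (sigma ^^ m) c \<notin> D"
  unfolding rot_dist_def using not_less_Least by blast

lemma rot_dist_le: "0 < m \<Longrightarrow> (sigma ^^ m) c \<in> D \<Longrightarrow> rot_dist D c \<le> m"
  using not_in_before_rot not_less by blast

lemma vert_rot: "c \<in> H \<Longrightarrow> vert (rot D c) = vert c"
  unfolding rot_def by (simp add: vert_funpow_sigma)

lemma rot_in_H: "c \<in> H \<Longrightarrow> rot D c \<in> H"
  unfolding rot_def by (simp add: funpow_sigma_in_H)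

lemma rot_H: "c \<in> H \<Longrightarrow> rot H c = sigma c"
proof -
  assume "c \<in> H"
  then have "rot_dist H c = 1"
    unfolding rot_dist_def by (intro Least_equality) (auto simp: sigma_in_H)
  then show ?thesis unfolding rot_def by simp
qed

lemma inj_on_rot:
  assumes "D \<subseteq> H"
  shows "inj_on (rot D) D"
proof -
  have eq: "a = b" if "a \<in> D" "b \<in> D" "rot D a = rot D b" "rot_dist D a \<le> rot_dist D b" for a b
  proof -
    let ?k = "rot_dist D b - rot_dist D a"
    have "(sigma ^^ rot_dist D a) a = (sigma ^^ rot_dist D a) ((sigma ^^ ?k) b)"
      using that(3,4) unfolding rot_def by (simp add: funpow_add_apply[symmetric])
    then have a_eq: "a = (sigma ^^ ?k) b"
      using funpow_sigma_inj funpow_sigma_in_H that assms by blast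
    have "?k < rot_dist D b"
      using rot_dist_pos[of D a] that assms by auto
    then show "a = b"
      using a_eq not_in_before_rot[of ?k D b] that(1) by (cases "?k = 0") auto
  qed
  show ?thesis
    by (rule inj_onI) (metis eq nle_le)
qed

lemma rot_image:
  assumes "D \<subseteq> H"
  shows "rot D ` D = D"
  by (rule endo_inj_surj) (use assms finite_subset[OF assms finite_H] inj_on_rot rot_in_self in auto)

lemma rot_superset_eq:
  assumes "D \<subseteq> D'" "D' \<subseteq> H" "c \<in> H" "rot D' c \<in> D"
  shows "rot D c = rot D' c"
proof -
  have at_D: "vert c \<in> vert ` D"
    using assms(3,4) vert_rot by (metis image_eqI)
  then have "rot_dist D' c \<le> rot_dist D c"
    using assms rot_dist_spec[of D c] rot_dist_le[of "rot_dist D c" c D']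
    unfolding rot_def by auto
  moreover have "rot_dist D c \<le> rot_dist D' c"
    using assms at_D rot_dist_spec[of D' c] rot_dist_le[of "rot_dist D' c" c D]
    unfolding rot_def by auto
  ultimately show ?thesis
    unfolding rot_def by simp
qed

lemma rot_via_superset:
  assumes "D \<subseteq> D'" "D' \<subseteq> H" "c \<in> H" "vert c \<in> vert ` D" "rot D' c \<notin> D"
  shows "rot D (rot D' c) = rot D c"
    and "rot_dist D c = rot_dist D' c + rot_dist D (rot D' c)"
proof -
  let ?n = "rot_dist D c" and ?n' = "rot_dist D' c" and ?c' = "rot D' c"
  have n: "0 < ?n" "(sigma ^^ ?n) c \<in> D"
    using rot_dist_spec[of D c] assms unfolding rot_def by auto
  have "?n' \<le> ?n"
    using rot_dist_le[of ?n c D'] n assms(1) by auto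
  moreover have "?n' \<noteq> ?n"
    using n assms(5) unfolding rot_def by auto
  ultimately have n'_less: "?n' < ?n" by simp
  have c': "?c' \<in> H" "vert ?c' \<in> vert ` D"
    using assms rot_in_H vert_rot by auto
  let ?m = "rot_dist D ?c'"
  have "0 < ?m" "(sigma ^^ (?m + ?n')) c \<in> D"
    using rot_dist_spec[of D ?c'] assms c' unfolding rot_def by (auto simp: funpow_add_apply)
  then have "?n \<le> ?m + ?n'"
    using rot_dist_le by auto
  moreover have "(sigma ^^ (?n - ?n')) ?c' = (sigma ^^ ?n) c"
    using n'_less unfolding rot_def by (simp add: funpow_add_apply[symmetric])
  then have "?m \<le> ?n - ?n'"
    using rot_dist_le n n'_less by auto
  ultimately show dist: "?n = ?n' + ?m"
    using n'_less by linarith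
  have "rot D c = (sigma ^^ (?m + ?n')) c"
    unfolding rot_def[of D c] dist by (simp add: add.commute)
  then show "rot D ?c' = rot D c"
    by (simp add: funpow_add_apply rot_def)
qed

lemma rot_dist_rot_superset_less:
  assumes "D \<subseteq> D'" "D' \<subseteq> H" "c \<in> H" "vert c \<in> vert ` D" "rot D' c \<notin> D"
  shows "rot_dist D (rot D' c) < rot_dist D c"
proof -
  have "vert c \<in> vert ` D'"
    using assms(1,4) by blast
  then have "0 < rot_dist D' c"
    using rot_dist_pos assms(2,3) by blast
  then show ?thesis
    using rot_via_superset(2)[OF assms] by simp
qed

lemma rot_two_darts:
  assumes D: "D \<subseteq> H" and uv: "u \<in> D" "v \<in> D" "u \<noteq> v" "vert u = vert v"
    and only: "\<forall>w\<in>D. vert w = vert u \<longrightarrow> w = u \<or> w = v"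
  shows "rot D u = v"
proof (rule ccontr)
  assume "rot D u \<noteq> v"
  moreover have "rot D u \<in> D" "vert (rot D u) = vert u"
    using rot_in_self vert_rot D uv by auto
  ultimately have fix_u: "(sigma ^^ rot_dist D u) u = u"
    using only unfolding rot_def by auto
  let ?n = "rot_dist D u"
  have n_pos: "0 < ?n"
    using rot_dist_pos D uv by auto
  have periodic: "(sigma ^^ (q * ?n)) u = u" for q
    by (induction q) (auto simp: funpow_add_apply fix_u)
  obtain m where m: "(sigma ^^ m) u = v"
    using sigma_orbit_pos D uv by (metis subsetD)
  have "(sigma ^^ m) u = (sigma ^^ (m mod ?n)) u"
    by (metis mod_div_mult_eq funpow_add_apply periodic)
  then have v_eq: "(sigma ^^ (m mod ?n)) u = v"
    using m by simp
  then have "0 < m mod ?n"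
    using uv(3) by (metis funpow_0 gr0I)
  moreover have "m mod ?n < ?n"
    using n_pos by simp
  ultimately show False
    using not_in_before_rot v_eq uv(2) by metis
qed

text \<open>For \<open>D \<subseteq> D'\<close>, the darts of \<open>D' - D\<close> cut each arc of \<open>D\<close> into pieces: \<open>subarc D D' d e\<close>
  says that the arc of \<open>e\<close> in \<open>D'\<close> is one of the pieces of the arc of \<open>d\<close> in \<open>D\<close>.\<close>

inductive subarc :: "'d set \<Rightarrow> 'd set \<Rightarrow> 'd \<Rightarrow> 'd \<Rightarrow> bool" for D D' d where
  subarc_refl: "subarc D D' d d"
| subarc_step: "subarc D D' d e \<Longrightarrow> rot D' e \<notin> D \<Longrightarrow> subarc D D' d (rot D' e)"

lemma subarc_new: "subarc D D' d e \<Longrightarrow> e = d \<or> e \<notin> D"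
  by (induction rule: subarc.induct) auto

lemma subarc_uncut: "subarc D D' d e \<Longrightarrow> rot D' d \<in> D \<Longrightarrow> e = d"
  by (induction rule: subarc.induct) auto

context
  fixes D D' assumes D: "D \<subseteq> D'" "D' \<subseteq> H"
begin

lemma subarc_invariant:
  assumes "subarc D D' d e" "d \<in> D"
  shows "e \<in> D' \<and> vert e = vert d \<and> rot D e = rot D d"
  using assms(1)
proof (induction rule: subarc.induct)
  case subarc_refl
  then show ?case using assms(2) D by auto
next
  case (subarc_step e)
  have "e \<in> H" "vert e \<in> vert ` D"
    using subarc_step.IH assms(2) D by auto
  then show ?case
    using subarc_step rot_via_superset(1)[OF D] rot_in_self[of D' e] vert_rot D by auto
qed

lemma subarc_last:
  assumes "d \<in> D"
  shows "\<exists>p. subarc D D' d p \<and> rot D' p = rot D d"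
proof -
  have "\<exists>p. subarc D D' d p \<and> rot D' p \<in> D" if "subarc D D' d e" for e
    using that
  proof (induction "rot_dist D e" arbitrary: e rule: less_induct)
    case less
    show ?case
    proof (cases "rot D' e \<in> D")
      case False
      have "e \<in> H" "vert e \<in> vert ` D"
        using subarc_invariant[OF less.prems assms] assms D by auto
      then have "rot_dist D (rot D' e) < rot_dist D e"
        using rot_dist_rot_superset_less[OF D] False by blast
      then show ?thesis
        using less.hyps less.prems False subarc_step by blast
    qed (use less.prems in blast)
  qed
  then obtain p where p: "subarc D D' d p" "rot D' p \<in> D"
    using subarc_refl by blast
  then have "rot D' p = rot D p"
    using rot_superset_eq[OF D] subarc_invariant[OF p(1) assms] D by auto
  then show ?thesis
    using p subarc_invariant[OF p(1) assms] by auto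
qed

end

definition edge_seg :: "'d \<Rightarrow> ('v, 'd) segment" where
  "edge_seg d = Edge {d, alpha d}"

lemma edge_seg_alpha: "d \<in> H \<Longrightarrow> edge_seg (alpha d) = edge_seg d"
  unfolding edge_seg_def by (simp add: alpha_alpha insert_commute)

text \<open>In the fat graph spanned by \<open>D\<close>, \<open>Arc d\<close> runs from \<open>d\<close> to \<open>rot D d\<close>; for \<open>D = H\<close>
  the rules are the coloring moves.\<close>

inductive_set colored :: "'d set \<Rightarrow> 'd set \<Rightarrow> ('v, 'd) segment set" for D S where
  colored_seed: "c \<in> S \<Longrightarrow> Arc c \<in> colored D S"
| colored_edge: "d \<in> D \<Longrightarrow> Arc d \<in> colored D S \<Longrightarrow> Arc (rot D d) \<in> colored D S
    \<Longrightarrow> edge_seg (rot D d) \<in> colored D S"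
| colored_arc: "d \<in> D \<Longrightarrow> edge_seg d \<in> colored D S \<or> edge_seg (rot D d) \<in> colored D S
    \<Longrightarrow> Arc d \<in> colored D S"

lemma colored_mono:
  assumes "S \<subseteq> S'"
  shows "colored D S \<subseteq> colored D S'"
proof
  fix x assume "x \<in> colored D S"
  then show "x \<in> colored D S'"
    by (induction rule: colored.induct) (use assms in \<open>auto intro: colored.intros\<close>)
qed

text \<open>A colouring of \<open>D\<close> is replayed in \<open>D'\<close> as soon as the seed arcs and the arcs
  that get cut are coloured in full.\<close>

lemma colored_refine:
  assumes D: "D \<subseteq> D'" "D' \<subseteq> H" and "S \<subseteq> D"
    and seeds: "\<And>d e. d \<in> S \<Longrightarrow> subarc D D' d e \<Longrightarrow> Arc e \<in> colored D' T"
    and cut: "\<And>d e. d \<in> D \<Longrightarrow> rot D' d \<notin> D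
      \<Longrightarrow> edge_seg d \<in> colored D' T \<or> edge_seg (rot D d) \<in> colored D' T
      \<Longrightarrow> subarc D D' d e \<Longrightarrow> Arc e \<in> colored D' T"
    and "d \<in> D" "edge_seg d \<in> colored D S"
  shows "edge_seg d \<in> colored D' T"
proof -
  let ?W = "colored D' T"
  have "case x of Arc d \<Rightarrow> (\<forall>e. subarc D D' d e \<longrightarrow> Arc e \<in> ?W) | _ \<Rightarrow> x \<in> ?W"
    if "x \<in> colored D S" for x
    using that
  proof (induction rule: colored.induct)
    case (colored_seed c)
    then show ?case using seeds by simp
  next
    case (colored_edge d)
    obtain p where p: "subarc D D' d p" "rot D' p = rot D d"
      using subarc_last[OF D colored_edge.hyps(1)] by blast
    have "p \<in> D'"
      using subarc_invariant[OF D p(1) colored_edge.hyps(1)] by blast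
    moreover have "Arc p \<in> ?W" "Arc (rot D' p) \<in> ?W"
      using colored_edge.IH p subarc_refl by auto
    ultimately have "edge_seg (rot D' p) \<in> ?W"
      by (rule colored.colored_edge)
    then show ?case
      using p(2) by (simp add: edge_seg_def)
  next
    case (colored_arc d)
    have edges: "edge_seg d \<in> ?W \<or> edge_seg (rot D d) \<in> ?W"
      using colored_arc.IH by (auto simp: edge_seg_def)
    show ?case
    proof (cases "rot D' d \<in> D")
      case True
      have "rot D d = rot D' d"
        using rot_superset_eq[OF D _ True] colored_arc.hyps(1) D by auto
      then have "Arc d \<in> ?W"
        using colored.colored_arc[of d D'] edges colored_arc.hyps(1) D by auto
      then show ?thesis
        using subarc_uncut True by auto
    qed (use cut colored_arc.hyps(1) edges in auto)
  qed
  from this[OF assms(7)] show ?thesis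
    by (simp add: edge_seg_def)
qed

lemma colored_edge_swap:
  assumes "u \<in> D" "v \<in> D" "rot D u = v" "rot D v = u" "edge_seg u \<in> colored D S"
  shows "edge_seg v \<in> colored D S"
proof -
  have "Arc u \<in> colored D S" "Arc v \<in> colored D S"
    using assms colored_arc by auto
  then show ?thesis
    using colored_edge[OF assms(1)] assms(3) by simp
qed

text \<open>The \<open>i\<close>-th edge of the ear is \<open>{c i, alpha (c i)}\<close>, traversed from \<open>vert (c i)\<close>
  to \<open>vert (alpha (c i))\<close>.\<close>

definition is_ear :: "'d set \<Rightarrow> 'v set \<Rightarrow> (nat \<Rightarrow> 'd) \<Rightarrow> nat \<Rightarrow> bool" where
  "is_ear D T c t \<longleftrightarrow>
     (\<forall>i\<le>t. c i \<in> H \<and> c i \<notin> D \<and> alpha (c i) \<notin> D) \<and>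
     (\<forall>i\<le>t. \<forall>j\<le>t. (c i = c j \<longrightarrow> i = j) \<and> c i \<noteq> alpha (c j)) \<and>
     vert (c 0) \<in> T \<and> vert (alpha (c t)) \<in> T \<and>
     (\<forall>i<t. vert (alpha (c i)) = vert (c (Suc i)) \<and> vert (c (Suc i)) \<notin> T) \<and>
     (\<forall>i<t. \<forall>j<t. vert (c (Suc i)) = vert (c (Suc j)) \<longrightarrow> i = j)"

definition ear_darts :: "(nat \<Rightarrow> 'd) \<Rightarrow> nat \<Rightarrow> 'd set" where
  "ear_darts c t = c ` {..t} \<union> alpha ` c ` {..t}"

lemma finite_ear_darts [simp]: "finite (ear_darts c t)"
  unfolding ear_darts_def by simp

lemma ear_darts_subset_H: "is_ear D T c t \<Longrightarrow> ear_darts c t \<subseteq> H"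
  unfolding is_ear_def ear_darts_def using alpha_in_H by auto

lemma ear_darts_disjoint: "is_ear D T c t \<Longrightarrow> ear_darts c t \<inter> D = {}"
  unfolding is_ear_def ear_darts_def by auto

lemma alpha_ear_dart: "is_ear D T c t \<Longrightarrow> w \<in> ear_darts c t \<Longrightarrow> alpha w \<in> ear_darts c t"
  unfolding is_ear_def ear_darts_def using alpha_alpha by auto

lemma edge_seg_ear_dart:
  "is_ear D T c t \<Longrightarrow> w \<in> ear_darts c t \<Longrightarrow> \<exists>i\<le>t. edge_seg w = edge_seg (c i)"
  unfolding ear_darts_def is_ear_def using edge_seg_alpha by auto

lemma ear_dart_cases:
  assumes "w \<in> ear_darts c t"
  obtains "w = c 0" | "w = alpha (c t)" | i where "i < t" "w = alpha (c i) \<or> w = c (Suc i)"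
proof -
  obtain j where "j \<le> t" "w = c j \<or> w = alpha (c j)"
    using assms unfolding ear_darts_def by auto
  then show ?thesis
  proof (elim disjE)
    show "w = c j \<Longrightarrow> thesis"
      using that \<open>j \<le> t\<close> by (cases j) (auto simp: Suc_le_eq)
    show "w = alpha (c j) \<Longrightarrow> thesis"
      using that(2) that(3)[of j] \<open>j \<le> t\<close> by (cases "j = t") auto
  qed
qed

lemma ear_dart_at_ends:
  assumes "is_ear D T c t" "w \<in> ear_darts c t" "vert w \<in> T"
  shows "w = c 0 \<or> w = alpha (c t)"
  using ear_dart_cases[OF assms(2)] assms(1,3) unfolding is_ear_def by metis

lemma ear_dart_at_inner:
  assumes "is_ear D T c t" "i < t" "w \<in> ear_darts c t" "vert w = vert (c (Suc i))"
  shows "w = alpha (c i) \<or> w = c (Suc i)"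
  using ear_dart_cases[OF assms(3)] assms(1,2,4) unfolding is_ear_def by metis

lemma card_ear_darts:
  assumes ear: "is_ear D T c t"
  shows "card (ear_darts c t) = 2 * (t + 1)"
proof -
  have "inj_on c {..t}"
    using ear unfolding is_ear_def by (auto intro: inj_onI)
  moreover have "inj_on (\<lambda>i. alpha (c i)) {..t}"
    using ear alpha_alpha unfolding is_ear_def by (intro inj_onI) (metis atMost_iff)
  moreover have "c ` {..t} \<inter> alpha ` c ` {..t} = {}"
    using ear unfolding is_ear_def by auto
  ultimately show ?thesis
    unfolding ear_darts_def by (simp add: card_Un_disjoint card_image image_comp)
qed

lemma card_vert_ear_darts:
  assumes ear: "is_ear D T c t" and "finite T"
  shows "card (T \<union> vert ` ear_darts c t) \<le> card T + t"
proof -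
  have "T \<union> vert ` ear_darts c t \<subseteq> T \<union> (\<lambda>i. vert (c (Suc i))) ` {..<t}"
    using ear unfolding is_ear_def by (auto elim: ear_dart_cases)
  then have "card (T \<union> vert ` ear_darts c t) \<le> card (T \<union> (\<lambda>i. vert (c (Suc i))) ` {..<t})"
    using assms(2) by (intro card_mono) auto
  also have "\<dots> \<le> card T + t"
    by (metis card_Un_le card_image_le card_lessThan add_le_mono le_trans order_refl finite_lessThan)
  finally show ?thesis .
qed

lemma ear_edges_colored:
  assumes D': "D' \<subseteq> H" "ear_darts c t \<subseteq> D'" and ear: "is_ear D T c t"
    and inner: "\<And>i w. i < t \<Longrightarrow> w \<in> D' \<Longrightarrow> vert w = vert (c (Suc i))
      \<Longrightarrow> w = alpha (c i) \<or> w = c (Suc i)"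
    and "i \<le> t" "edge_seg (c i) \<in> colored D' S" "j \<le> t"
  shows "edge_seg (c j) \<in> colored D' S"
proof -
  let ?W = "colored D' S"
  have step: "edge_seg (c i) \<in> ?W \<longleftrightarrow> edge_seg (c (Suc i)) \<in> ?W" if "i < t" for i
  proof -
    let ?u = "alpha (c i)" and ?v = "c (Suc i)"
    have uv: "?u \<in> D'" "?v \<in> D'" "?u \<noteq> ?v" "vert ?u = vert ?v"
      using D'(2) ear that unfolding ear_darts_def is_ear_def
      by (auto simp: Suc_le_eq) (metis Suc_leI less_imp_le_nat)
    have "rot D' ?u = ?v" "rot D' ?v = ?u"
      using rot_two_darts[OF D'(1)] uv inner[OF that] by (metis, metis)
    moreover have "edge_seg ?u = edge_seg (c i)"
      using edge_seg_alpha ear that unfolding is_ear_def by simp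
    ultimately show ?thesis
      using colored_edge_swap uv by metis
  qed
  have "edge_seg (c j) \<in> ?W \<longleftrightarrow> edge_seg (c 0) \<in> ?W" if "j \<le> t" for j
    using that by (induction j) (auto simp: step)
  then show ?thesis
    using assms(5-7) by blast
qed

text \<open>The seeds \<open>S\<close> colour the fat graph spanned by \<open>D\<close>, and there are at most
  \<open>|E(D)| - |V(D)| + 2\<close> of them: by Euler's formula this is the number of faces of \<open>D\<close>
  once \<open>D\<close> is a connected plane graph.\<close>

definition good_seeds :: "'d set \<Rightarrow> 'd set \<Rightarrow> bool" where
  "good_seeds D S \<longleftrightarrow> D \<subseteq> H \<and> D \<noteq> {} \<and> (\<forall>d\<in>D. alpha d \<in> D) \<and> S \<subseteq> D \<and>
     (\<forall>d\<in>D. edge_seg d \<in> colored D S) \<and> 2 * card S + 2 * card (vert ` D) \<le> card D + 4"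

lemma good_seeds_cycle:
  assumes ear: "is_ear {} {x} c t"
  shows "good_seeds (ear_darts c t) {c 0, alpha (c t)}"
proof -
  let ?P = "ear_darts c t" and ?S = "{c 0, alpha (c t)}"
  have P: "?P \<subseteq> H"
    using ear_darts_subset_H[OF ear] .
  have ends: "c 0 \<in> ?P" "alpha (c t) \<in> ?P" "alpha (c t) \<noteq> c 0"
    "vert (alpha (c t)) = vert (c 0)"
    using ear unfolding ear_darts_def is_ear_def by (auto, metis order_refl zero_le)
  have "rot ?P (alpha (c t)) = c 0"
    using rot_two_darts[OF P ends(2,1,3,4)] ear_dart_at_ends[OF ear] ends(4) ear
    unfolding is_ear_def by auto
  then have "edge_seg (c 0) \<in> colored ?P ?S"
    using colored_edge[of "alpha (c t)" ?P ?S] ends colored_seed by fastforce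
  then have "edge_seg (c i) \<in> colored ?P ?S" if "i \<le> t" for i
    using ear_edges_colored[where c = c and t = t, OF P order_refl ear ear_dart_at_inner[OF ear]]
      that by blast
  then have colors: "\<forall>d\<in>?P. edge_seg d \<in> colored ?P ?S"
    using edge_seg_ear_dart[OF ear] by metis
  have "card (vert ` ?P) \<le> card ({x} \<union> vert ` ?P)"
    by (intro card_mono) auto
  also have "\<dots> \<le> 1 + t"
    using card_vert_ear_darts[OF ear] by simp
  finally have "card (vert ` ?P) \<le> 1 + t" .
  moreover have "card ?S \<le> 2"
    by (simp add: card_insert_if)
  ultimately show ?thesis
    unfolding good_seeds_def
    using P ends alpha_ear_dart[OF ear] colors card_ear_darts[OF ear] by auto
qed

end

locale ear_extension = rotation_system V H vert alpha sigma
  for V :: "'v set" and H :: "'d set" and vert :: "'d \<Rightarrow> 'v" and alpha sigma :: "'d \<Rightarrow> 'd" +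
  fixes D S :: "'d set" and c :: "nat \<Rightarrow> 'd" and t :: nat
  assumes good: "good_seeds D S" and ear: "is_ear D (vert ` D) c t"
begin

abbreviation P :: "'d set" where "P \<equiv> ear_darts c t"

abbreviation D' :: "'d set" where "D' \<equiv> D \<union> P"

lemma D_subset_H: "D \<subseteq> H" and S_subset_D: "S \<subseteq> D"
  using good unfolding good_seeds_def by auto

lemma D'_subset_H: "D' \<subseteq> H"
  using D_subset_H ear_darts_subset_H[OF ear] by blast

lemma D_subset_D': "D \<subseteq> D'"
  by blast

lemma P_disjoint_D: "P \<inter> D = {}"
  using ear_darts_disjoint[OF ear] .

lemma inner_darts:
  assumes "i < t" "w \<in> D'" "vert w = vert (c (Suc i))"
  shows "w = alpha (c i) \<or> w = c (Suc i)"
proof -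
  have "vert (c (Suc i)) \<notin> vert ` D"
    using ear assms(1) unfolding is_ear_def by blast
  then have "w \<in> P"
    using assms(2,3) by (metis UnE imageI)
  then show ?thesis
    using ear_dart_at_inner[OF ear assms(1) _ assms(3)] by blast
qed

lemma ear_colored:
  assumes "w \<in> P" "edge_seg w \<in> colored D' T" "w' \<in> P"
  shows "edge_seg w' \<in> colored D' T"
proof -
  obtain i j where ij: "i \<le> t" "edge_seg w = edge_seg (c i)" "j \<le> t" "edge_seg w' = edge_seg (c j)"
    using edge_seg_ear_dart[OF ear] assms(1,3) by metis
  have "edge_seg (c j) \<in> colored D' T"
    by (rule ear_edges_colored[where c = c and t = t, OF D'_subset_H _ ear inner_darts ij(1) _ ij(3)])
      (use assms(2) ij(2) in auto)
  then show ?thesis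
    using ij(4) by simp
qed

text \<open>Turning backwards around the old vertex of \<open>c 0\<close>, \<open>rot_dist D\<close> increases strictly as long as
  the darts met are new, and only \<open>c 0\<close> and \<open>alpha (c t)\<close> are new darts at old vertices.\<close>

lemma exists_cut_arc: "\<exists>d\<in>D. rot D' d \<notin> D"
proof (rule ccontr)
  assume uncut: "\<not> ?thesis"
  have c0: "c 0 \<in> D'" "c 0 \<notin> D" "vert (c 0) \<in> vert ` D"
    using ear P_disjoint_D unfolding ear_darts_def is_ear_def by auto
  obtain q1 where q1: "q1 \<in> D'" "rot D' q1 = c 0"
    using rot_image[OF D'_subset_H] c0(1) by (metis imageE)
  obtain q2 where q2: "q2 \<in> D'" "rot D' q2 = q1"
    using rot_image[OF D'_subset_H] q1(1) by (metis imageE)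
  have "q1 \<notin> D"
    using uncut q1(2) c0(2) by metis
  then have new: "q1 \<notin> D" "q2 \<notin> D"
    using uncut q2(2) by metis+
  have at_D: "vert q1 \<in> vert ` D" "vert q2 \<in> vert ` D"
    using q1 q2 c0(3) vert_rot D'_subset_H by (metis subsetD)+
  have "rot_dist D (c 0) < rot_dist D q1" "rot_dist D q1 < rot_dist D q2"
    using rot_dist_rot_superset_less[OF D_subset_D' D'_subset_H] D'_subset_H q1 q2 at_D
      c0(2) new by (metis subsetD)+
  moreover have "q1 = c 0 \<or> q1 = alpha (c t)" "q2 = c 0 \<or> q2 = alpha (c t)"
    using ear_dart_at_ends[OF ear] q1(1) q2(1) new at_D by auto
  ultimately show False
    by auto
qed

lemma subarcs_colored:
  assumes "\<forall>w\<in>P. edge_seg w \<in> colored D' T" "d \<in> D" "Arc d \<in> colored D' T \<or> rot D' d \<notin> D"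
    and "subarc D D' d e"
  shows "Arc e \<in> colored D' T"
proof -
  have "e = d \<or> e \<in> P"
    using subarc_new[OF assms(4)] subarc_invariant[OF D_subset_D' D'_subset_H assms(4,2)] by blast
  moreover have "rot D' d \<in> D'"
    using rot_in_self[OF D'_subset_H] assms(2) by blast
  ultimately show ?thesis
    using assms(1-3) colored_arc by blast
qed

lemma cut_arc_touches_ear:
  assumes d: "d \<in> D" "rot D' d \<notin> D"
    and colored: "edge_seg d \<in> colored D' T \<or> edge_seg (rot D d) \<in> colored D' T"
  shows "\<exists>q\<in>D'. rot D' q \<in> P \<and> (Arc q \<in> colored D' T \<or> Arc (rot D' q) \<in> colored D' T)"
proof (cases "edge_seg d \<in> colored D' T")
  case True
  then have "Arc d \<in> colored D' T"
    using colored_arc d(1) by blast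
  moreover have "rot D' d \<in> P"
    using rot_in_self[OF D'_subset_H] d by blast
  ultimately show ?thesis
    using d(1) by blast
next
  case False
  obtain p where p: "subarc D D' d p" "rot D' p = rot D d"
    using subarc_last[OF D_subset_D' D'_subset_H d(1)] by blast
  have "p \<in> D'"
    using subarc_invariant[OF D_subset_D' D'_subset_H p(1) d(1)] by blast
  moreover have "p \<noteq> d"
    using p(2) d rot_in_self[OF D_subset_H] by metis
  ultimately have "p \<in> P"
    using subarc_new[OF p(1)] by blast
  moreover have "Arc p \<in> colored D' T"
    using colored_arc[of p D' T] False colored p(2) \<open>p \<in> D'\<close> by auto
  moreover obtain q where "q \<in> D'" "rot D' q = p"
    using rot_image[OF D'_subset_H] \<open>p \<in> D'\<close> by (metis imageE)
  ultimately show ?thesis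
    by blast
qed

text \<open>Were no arc touching the ear coloured, no arc cut by the ear could be coloured either, so
  replaying \<open>colored D S\<close> in \<open>D'\<close> would succeed and colour the edge at a cut arc.\<close>

lemma seeds_touch_ear:
  "\<exists>q\<in>D'. rot D' q \<in> P \<and> (Arc q \<in> colored D' S \<or> Arc (rot D' q) \<in> colored D' S)"
proof (rule ccontr)
  let ?W = "colored D' S"
  assume untouched: "\<not> ?thesis"
  have "edge_seg d \<in> ?W" if "d \<in> D" for d
  proof (rule colored_refine[OF D_subset_D' D'_subset_H S_subset_D])
    show "Arc e \<in> ?W" if "d \<in> S" "subarc D D' d e" for d e
    proof -
      have "Arc d \<in> ?W"
        using colored_seed that(1) .
      moreover have "d \<in> D'" "rot D' d \<in> D'"
        using that(1) S_subset_D rot_in_self[OF D'_subset_H] by auto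
      ultimately have "rot D' d \<in> D"
        using untouched by blast
      then show ?thesis
        using subarc_uncut that \<open>Arc d \<in> ?W\<close> by blast
    qed
    show "Arc e \<in> ?W" if "d \<in> D" "rot D' d \<notin> D"
      "edge_seg d \<in> ?W \<or> edge_seg (rot D d) \<in> ?W" for d e
      using cut_arc_touches_ear[OF that] untouched by blast
  qed (use good that in \<open>auto simp: good_seeds_def\<close>)
  then show False
    using exists_cut_arc cut_arc_touches_ear untouched by blast
qed

lemma one_more_seed:
  obtains T w where "S \<subseteq> T" "T \<subseteq> D'" "card T \<le> card S + 1" "w \<in> P"
    "edge_seg w \<in> colored D' T"
proof -
  let ?W = "colored D' S"
  obtain q where q: "q \<in> D'" "rot D' q \<in> P" "Arc q \<in> ?W \<or> Arc (rot D' q) \<in> ?W"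
    using seeds_touch_ear by blast
  define T where "T = insert (if Arc q \<in> ?W then rot D' q else q) S"
  have seed: "Arc (if Arc q \<in> ?W then rot D' q else q) \<in> colored D' T"
    by (rule colored_seed) (simp add: T_def)
  have "?W \<subseteq> colored D' T"
    by (rule colored_mono) (auto simp: T_def)
  then have "Arc q \<in> colored D' T" "Arc (rot D' q) \<in> colored D' T"
    using q(3) seed by (cases "Arc q \<in> ?W"; auto)+
  then have "edge_seg (rot D' q) \<in> colored D' T"
    using colored_edge q(1) by blast
  moreover have "S \<subseteq> T" "T \<subseteq> D'"
    using S_subset_D q(1) rot_in_self[OF D'_subset_H] unfolding T_def by auto
  moreover have "finite S"
    using finite_subset[OF S_subset_D] finite_subset[OF D_subset_H finite_H] by blast
  then have "card T \<le> card S + 1"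
    unfolding T_def by (simp add: card_insert_if)
  ultimately show ?thesis
    using that q(2) by blast
qed

lemma good_seeds_extend: "\<exists>T. good_seeds D' T"
proof -
  obtain T w where T: "S \<subseteq> T" "T \<subseteq> D'" "card T \<le> card S + 1"
    and w: "w \<in> P" "edge_seg w \<in> colored D' T"
    using one_more_seed by blast
  have ear_colored: "\<forall>w\<in>P. edge_seg w \<in> colored D' T"
    using ear_colored[OF w] by blast
  have "edge_seg d \<in> colored D' T" if "d \<in> D" for d
  proof (rule colored_refine[OF D_subset_D' D'_subset_H S_subset_D])
    show "Arc e \<in> colored D' T" if "d \<in> S" "subarc D D' d e" for d e
      using subarcs_colored[OF ear_colored] that T(1) S_subset_D colored_seed by blast
    show "Arc e \<in> colored D' T" if "d \<in> D" "rot D' d \<notin> D" "subarc D D' d e" for d e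
      using subarcs_colored[OF ear_colored] that by blast
  qed (use good that in \<open>auto simp: good_seeds_def\<close>)
  then have colors: "\<forall>d\<in>D'. edge_seg d \<in> colored D' T"
    using ear_colored by blast
  have "finite D"
    using finite_subset[OF D_subset_H finite_H] .
  then have "card D' = card D + 2 * (t + 1)"
    using P_disjoint_D card_ear_darts[OF ear] by (simp add: card_Un_disjoint Int_commute)
  moreover have "card (vert ` D') \<le> card (vert ` D) + t"
    using card_vert_ear_darts[OF ear] \<open>finite D\<close> by (simp add: image_Un)
  moreover have "\<forall>d\<in>D'. alpha d \<in> D'"
    using good alpha_ear_dart[OF ear] unfolding good_seeds_def by blast
  ultimately have "good_seeds D' T"
    using good D'_subset_H T colors unfolding good_seeds_def by auto
  then show ?thesis ..
qed

end

locale ear_walk = rotation_system V H vert alpha sigma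
  for V :: "'v set" and H :: "'d set" and vert :: "'d \<Rightarrow> 'v" and alpha sigma :: "'d \<Rightarrow> 'd" +
  fixes d0 :: 'd and e :: "nat \<Rightarrow> 'd" and w :: "nat \<Rightarrow> 'v" and n :: nat
  assumes d0: "d0 \<in> H"
    and path: "\<And>i. i < n \<Longrightarrow>
      e i \<in> H - {d0, alpha d0} \<and> vert (e i) = w i \<and> vert (alpha (e i)) = w (Suc i)"
    and path_start: "w 0 = vert (alpha d0)"
    and w_inj: "\<And>i j. i \<le> n \<Longrightarrow> j \<le> n \<Longrightarrow> w i = w j \<Longrightarrow> i = j"
begin

definition ear_path :: "nat \<Rightarrow> 'd" where
  "ear_path i = (case i of 0 \<Rightarrow> d0 | Suc k \<Rightarrow> e k)"

lemma ear_path_0: "ear_path 0 = d0" and ear_path_Suc: "ear_path (Suc k) = e k"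
  unfolding ear_path_def by simp_all

lemma ear_path_in_H: "i \<le> n \<Longrightarrow> ear_path i \<in> H"
  using d0 path unfolding ear_path_def by (cases i) auto

lemma vert_alpha_ear_path: "i \<le> n \<Longrightarrow> vert (alpha (ear_path i)) = w i"
  using path path_start unfolding ear_path_def by (cases i) auto

lemma vert_ear_path_Suc: "k < n \<Longrightarrow> vert (ear_path (Suc k)) = w k"
  using path ear_path_Suc by simp

lemma ear_path_inj: "i \<le> n \<Longrightarrow> j \<le> n \<Longrightarrow> ear_path i = ear_path j \<Longrightarrow> i = j"
  using vert_alpha_ear_path w_inj by metis

lemma ear_path_not_reversed:
  assumes "i \<le> n" "j \<le> n"
  shows "ear_path i \<noteq> alpha (ear_path j)"
proof
  assume rev: "ear_path i = alpha (ear_path j)"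
  then have rev': "alpha (ear_path i) = ear_path j"
    using alpha_alpha ear_path_in_H assms(2) by metis
  show False
  proof (cases j)
    case 0
    then show False
      using rev alpha_neq[OF d0] path assms(1) ear_path_Suc unfolding ear_path_def by (cases i) auto
  next
    case (Suc l)
    show False
    proof (cases i)
      case 0
      have "e l \<in> H - {d0, alpha d0}"
        using path assms(2) Suc by simp
      then show False
        using rev' 0 Suc ear_path_Suc unfolding ear_path_def by auto
    next
      case (Suc k)
      have "w k = w (Suc l)" "w (Suc k) = w l"
        using vert_alpha_ear_path vert_ear_path_Suc rev rev' Suc \<open>j = Suc l\<close> assms
        by (metis Suc_le_lessD)+
      moreover have "k \<le> n" "l \<le> n"
        using Suc \<open>j = Suc l\<close> assms by auto
      ultimately have "k = Suc l" "Suc k = l"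
        using w_inj Suc \<open>j = Suc l\<close> assms by auto
      then show False
        by simp
    qed
  qed
qed

end

context rotation_system
begin

text \<open>Without a bridge, the head of \<open>d0\<close> is joined to \<open>T\<close> by a walk avoiding the edge of \<open>d0\<close>;
  a shortest one has distinct vertices, all outside \<open>T\<close> but the last.\<close>

lemma ear_walk_exists:
  assumes bridgeless: "fg_connected V (H - {d0, alpha d0}) vert alpha"
    and start: "d0 \<in> H" "vert d0 \<in> T"
  obtains e w n where "ear_walk V H vert alpha sigma d0 e w n" "w n \<in> T" "\<forall>i<n. w i \<notin> T"
proof -
  let ?E = "H - {d0, alpha d0}"
  have "(vert (alpha d0), vert d0) \<in> {(vert d, vert (alpha d)) | d. d \<in> ?E}\<^sup>*"
    using bridgeless vert_in_V alpha_in_H start(1) unfolding fg_connected_def by blast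
  then obtain n w where w: "w 0 = vert (alpha d0)" "w n \<in> T"
    "\<forall>i<n. (w i, w (Suc i)) \<in> {(vert d, vert (alpha d)) | d. d \<in> ?E}"
    and outside: "\<forall>i<n. w i \<notin> T" and distinct: "\<forall>i j. i < j \<longrightarrow> j \<le> n \<longrightarrow> w i \<noteq> w j"
    using start(2) by (rule shortest_walk)
  have "\<forall>i<n. \<exists>d. d \<in> ?E \<and> vert d = w i \<and> vert (alpha d) = w (Suc i)"
  proof (intro allI impI)
    fix i assume "i < n"
    then obtain d where "d \<in> ?E" "(w i, w (Suc i)) = (vert d, vert (alpha d))"
      using w(3) by blast
    then show "\<exists>d. d \<in> ?E \<and> vert d = w i \<and> vert (alpha d) = w (Suc i)"
      by auto
  qed
  then obtain e where "\<forall>i<n. e i \<in> ?E \<and> vert (e i) = w i \<and> vert (alpha (e i)) = w (Suc i)"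
    by metis
  moreover have "i = j" if "i \<le> n" "j \<le> n" "w i = w j" for i j
    using distinct that by (metis linorder_neqE_nat)
  ultimately have "ear_walk V H vert alpha sigma d0 e w n"
    by unfold_locales (use start(1) w(1) in auto)
  then show ?thesis
    using that w(2) outside by blast
qed

lemma ear_exists:
  assumes bridgeless: "fg_connected V (H - {d0, alpha d0}) vert alpha"
    and D: "\<forall>d\<in>D. alpha d \<in> D" "vert ` D \<subseteq> T"
    and start: "d0 \<in> H" "d0 \<notin> D" "vert d0 \<in> T"
  obtains c t where "is_ear D T c t" "c 0 = d0"
proof -
  obtain e w n where walk: "ear_walk V H vert alpha sigma d0 e w n"
    and last: "w n \<in> T" and outside: "\<forall>i<n. w i \<notin> T"
    using ear_walk_exists[OF bridgeless start(1,3)] by blast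
  interpret ear_walk V H vert alpha sigma d0 e w n
    by (rule walk)
  have not_in_D: "ear_path i \<notin> D" if "i \<le> n" for i
  proof (cases i)
    case (Suc k)
    then have "vert (ear_path i) \<notin> T"
      using that outside vert_ear_path_Suc by simp
    then show ?thesis
      using D(2) by blast
  qed (simp add: ear_path_0 start(2))
  have "ear_path i \<in> H \<and> ear_path i \<notin> D \<and> alpha (ear_path i) \<notin> D" if "i \<le> n" for i
    using ear_path_in_H[OF that] not_in_D[OF that] D(1) alpha_alpha by metis
  moreover have "\<forall>i<n. vert (alpha (ear_path i)) = vert (ear_path (Suc i)) \<and>
      vert (ear_path (Suc i)) \<notin> T"
    using vert_alpha_ear_path vert_ear_path_Suc outside by simp
  moreover have "\<forall>i<n. \<forall>j<n. vert (ear_path (Suc i)) = vert (ear_path (Suc j)) \<longrightarrow> i = j"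
    using vert_ear_path_Suc w_inj by simp
  moreover have "vert (ear_path 0) \<in> T" "vert (alpha (ear_path n)) \<in> T"
    using start(3) vert_alpha_ear_path last ear_path_0 by auto
  ultimately have "is_ear D T ear_path n"
    unfolding is_ear_def using ear_path_inj ear_path_not_reversed by blast
  then show ?thesis
    using that ear_path_0 by blast
qed

lemma exists_attached_dart:
  assumes con: "fg_connected V H vert alpha"
    and D: "D \<subseteq> H" "\<forall>d\<in>D. alpha d \<in> D" "D \<noteq> {}" "D \<noteq> H"
  shows "\<exists>d0\<in>H - D. vert d0 \<in> vert ` D"
proof (rule ccontr)
  assume detached: "\<not> ?thesis"
  obtain d1 where d1: "d1 \<in> D"
    using D(3) by blast
  have "v \<in> vert ` D" if "v \<in> V" for v
  proof -
    have "(vert d1, v) \<in> {(vert d, vert (alpha d)) | d. d \<in> H}\<^sup>*"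
      using con d1 D(1) vert_in_V that unfolding fg_connected_def by blast
    then show ?thesis
    proof (induction rule: rtrancl_induct)
      case (step y z)
      then obtain d where d: "d \<in> H" "y = vert d" "z = vert (alpha d)"
        by blast
      then have "d \<in> D"
        using detached step.IH by blast
      then show ?case
        using d D(2) by blast
    qed (use d1 in blast)
  qed
  moreover obtain d where "d \<in> H - D"
    using D(1,4) by blast
  ultimately show False
    using detached vert_in_V by blast
qed

lemma good_seeds_grow:
  assumes con: "fg_connected V H vert alpha"
    and bridgeless: "\<And>d. d \<in> H \<Longrightarrow> fg_connected V (H - {d, alpha d}) vert alpha"
    and "good_seeds D S"
  shows "\<exists>S'. good_seeds H S'"
  using assms(3)
proof (induction "card (H - D)" arbitrary: D S rule: less_induct)
  case less
  show ?case
  proof (cases "D = H")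
    case False
    have D: "D \<subseteq> H" "\<forall>d\<in>D. alpha d \<in> D" "D \<noteq> {}"
      using less.prems unfolding good_seeds_def by auto
    obtain d1 where d1: "d1 \<in> H - D" "vert d1 \<in> vert ` D"
      using exists_attached_dart[OF con D False] by blast
    obtain c t where ear_d1: "is_ear D (vert ` D) c t" "c 0 = d1"
      by (rule ear_exists[OF bridgeless D(2) order_refl]) (use d1 in auto)
    interpret ear_extension V H vert alpha sigma D S c t
      by unfold_locales (use fat_graph less.prems ear_d1 in auto)
    obtain S' where good': "good_seeds D' S'"
      using good_seeds_extend by blast
    have "d1 \<in> ear_darts c t"
      using ear_d1(2) unfolding ear_darts_def by force
    then have "card (H - D') < card (H - D)"
      using d1 D'_subset_H finite_H by (intro psubset_card_mono) auto
    then show ?thesis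
      using less.hyps good' by blast
  qed (use less.prems in blast)
qed

lemma exists_good_seeds:
  assumes con: "fg_connected V H vert alpha"
    and bridgeless: "\<And>d. d \<in> H \<Longrightarrow> fg_connected V (H - {d, alpha d}) vert alpha"
    and "d0 \<in> H"
  obtains S where "good_seeds H S"
proof -
  obtain c t where "is_ear {} {vert d0} c t"
    by (rule ear_exists[where D = "{}" and T = "{vert d0}", OF bridgeless[OF \<open>d0 \<in> H\<close>]])
      (use \<open>d0 \<in> H\<close> in auto)
  then have "good_seeds (ear_darts c t) {c 0, alpha (c t)}"
    by (rule good_seeds_cycle)
  then show ?thesis
    using good_seeds_grow[OF con bridgeless] that by blast
qed

lemma fg_edges_eq_image: "fg_edges H alpha = (\<lambda>d. {d, alpha d}) ` H"
  unfolding fg_edges_def by auto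

lemma card_darts_eq_twice_edges: "card H = 2 * card (fg_edges H alpha)"
proof -
  let ?E = "fg_edges H alpha"
  have "\<Union>?E = H"
    unfolding fg_edges_eq_image using alpha_in_H by auto
  moreover have "card e = 2" if "e \<in> ?E" for e
    using that alpha_neq unfolding fg_edges_eq_image by (auto simp: card_insert_if) metis
  moreover have "e1 \<inter> e2 = {}" if "e1 \<in> ?E" "e2 \<in> ?E" "e1 \<noteq> e2" for e1 e2
    using that alpha_alpha unfolding fg_edges_eq_image by auto (metis alpha_alpha)+
  ultimately show ?thesis
    using card_partition[of ?E 2] finite_H unfolding fg_edges_eq_image by auto
qed

lemma V_eq_vert_H:
  assumes con: "fg_connected V H vert alpha" and "d \<in> H"
  shows "V = vert ` H"
proof
  show "V \<subseteq> vert ` H"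
  proof
    fix v assume "v \<in> V"
    then have "(v, vert d) \<in> {(vert d, vert (alpha d)) | d. d \<in> H}\<^sup>*"
      using con vert_in_V assms(2) unfolding fg_connected_def by blast
    then show "v \<in> vert ` H"
      using assms(2) by (cases rule: converse_rtranclE) auto
  qed
qed (use vert_in_V in blast)

lemma segments_eq_colored:
  assumes good: "good_seeds H S" and V: "V = vert ` H"
  shows "segments V H vert alpha = colored H S"
proof
  have segments: "segments V H vert alpha = edge_seg ` H \<union> Arc ` H"
    unfolding segments_def fg_edges_eq_image edge_seg_def V by auto
  have edges: "edge_seg d \<in> colored H S" if "d \<in> H" for d
    using good that unfolding good_seeds_def by blast
  then show "segments V H vert alpha \<subseteq> colored H S"
    unfolding segments using colored_arc by blast
  show "colored H S \<subseteq> segments V H vert alpha"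
  proof
    fix x assume "x \<in> colored H S"
    then show "x \<in> segments V H vert alpha"
      by (induction rule: colored.induct)
        (use good rot_in_self[of H] in \<open>auto simp: segments good_seeds_def\<close>)
  qed
qed

lemma exists_coloring_move:
  assumes "Arc ` S \<subseteq> A" "A \<subset> colored H S"
  shows "\<exists>s\<in>colored H S - A. coloring_move H alpha sigma A (insert s A)"
proof (rule ccontr)
  assume stuck: "\<not> ?thesis"
  have "x \<in> A" if "x \<in> colored H S" for x
    using that
  proof (induction rule: colored.induct)
    case (colored_seed c)
    then show ?case
      using assms(1) by blast
  next
    case (colored_edge d)
    have "rot H d \<in> H" "sigma d = rot H d"
      using rot_in_self[of H] rot_H colored_edge.hyps(1) by auto
    then have "coloring_move H alpha sigma A (insert (edge_seg (rot H d)) A)"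
      if "edge_seg (rot H d) \<notin> A"
      unfolding coloring_move_def edge_seg_def
      using that colored_edge.IH colored_edge.hyps(1) edge_seg_def
      by (intro exI[of _ "edge_seg (rot H d)"]) (auto simp: edge_seg_def)
    then show ?case
      using stuck colored.colored_edge[OF colored_edge.hyps] by blast
  next
    case (colored_arc d)
    have "coloring_move H alpha sigma A (insert (Arc d) A)" if "Arc d \<notin> A"
      unfolding coloring_move_def
      using that colored_arc.IH colored_arc.hyps(1) rot_H
      by (intro exI[of _ "Arc d"]) (auto simp: edge_seg_def)
    then show ?case
      using stuck colored.colored_arc[OF colored_arc.hyps(1)] colored_arc.IH by blast
  qed
  then show False
    using assms(2) by blast
qed

lemma coloring_sequence:
  assumes "finite (colored H S)" "Arc ` S \<subseteq> A" "A \<subseteq> colored H S"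
  shows "\<exists>f. f 0 = A \<and> f (card (colored H S) - card A) = colored H S \<and>
    (\<forall>i < card (colored H S) - card A. coloring_move H alpha sigma (f i) (f (Suc i)))"
  using assms(2,3)
proof (induction "card (colored H S) - card A" arbitrary: A)
  case 0
  then have "A = colored H S"
    using card_seteq[OF assms(1) "0.prems"(2)] by simp
  then show ?case
    by (intro exI[of _ "\<lambda>_. colored H S"]) simp
next
  case (Suc n)
  then have "A \<noteq> colored H S"
    by (metis diff_self_eq_0 nat.distinct(1))
  then have "A \<subset> colored H S"
    using Suc.prems(2) by (intro psubsetI)
  then obtain s where s: "s \<in> colored H S" "s \<notin> A" "coloring_move H alpha sigma A (insert s A)"
    using exists_coloring_move[OF Suc.prems(1)] by blast
  have "finite A"
    using finite_subset[OF Suc.prems(2) assms(1)] .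
  then have n: "n = card (colored H S) - card (insert s A)"
    using Suc.hyps(2) s(2) by simp
  moreover have "Arc ` S \<subseteq> insert s A" "insert s A \<subseteq> colored H S"
    using Suc.prems s(1) by auto
  ultimately have "\<exists>f. f 0 = insert s A \<and>
      f (card (colored H S) - card (insert s A)) = colored H S \<and>
      (\<forall>i < card (colored H S) - card (insert s A).
        coloring_move H alpha sigma (f i) (f (Suc i)))"
    by (rule Suc.hyps(1))
  then obtain f where f: "f 0 = insert s A" "f n = colored H S"
    "\<forall>i<n. coloring_move H alpha sigma (f i) (f (Suc i))"
    unfolding n[symmetric] by blast
  let ?g = "\<lambda>i. case i of 0 \<Rightarrow> A | Suc k \<Rightarrow> f k"
  have "\<forall>i<Suc n. coloring_move H alpha sigma (?g i) (?g (Suc i))"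
    using f s(3) by (auto simp: less_Suc_eq_0_disj)
  then show ?case
    unfolding Suc.hyps(2)[symmetric] using f by (intro exI[of _ ?g]) simp
qed

lemma k_colorable_good_seeds:
  assumes good: "good_seeds H S" and V: "V = vert ` H"
  shows "k_colorable V H vert alpha sigma (card S)"
proof -
  let ?F = "segments V H vert alpha"
  have F: "?F = colored H S"
    using segments_eq_colored[OF good V] .
  have "finite (colored H S)"
    unfolding F[symmetric] segments_def fg_edges_eq_image V using finite_H by simp
  moreover have seeds: "Arc ` S \<subseteq> colored H S"
    using colored_seed by blast
  ultimately obtain f where "f 0 = Arc ` S" "f (card ?F - card S) = ?F"
    "\<forall>i < card ?F - card S. coloring_move H alpha sigma (f i) (f (Suc i))"
    using coloring_sequence[of S "Arc ` S"] F by (auto simp: card_image inj_on_def)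
  moreover have "Arc ` S \<subseteq> ?F - Edge ` fg_edges H alpha"
    using seeds F by auto
  moreover have "card (Arc ` S) = card S"
    by (simp add: card_image inj_on_def)
  ultimately show ?thesis
    unfolding k_colorable_def Let_def by blast
qed

lemma card_good_seeds_le_faces:
  assumes "good_seeds H S" "V = vert ` H" "fg_plane V H alpha sigma"
  shows "card S \<le> card (dual_vertices H alpha sigma)"
  using assms card_darts_eq_twice_edges unfolding good_seeds_def fg_plane_def by auto

lemma wirtinger_number_no_edges:
  assumes "fg_connected V H vert alpha" "H = {}"
  shows "wirtinger_number V H vert alpha sigma \<le> card (dual_vertices H alpha sigma)"
proof -
  obtain v where "v \<in> V"
    using fat_graph unfolding fat_graph_def by blast
  then have "V = {v}"
    using assms unfolding fg_connected_def by auto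
  then have "segments V H vert alpha = {Circle v}"
    unfolding segments_def fg_edges_def using assms(2) by auto
  then have "k_colorable V H vert alpha sigma 1"
    unfolding k_colorable_def Let_def fg_edges_def
    by (intro exI[of _ "{Circle v}"] exI[of _ "\<lambda>_. {Circle v}"]) (simp add: assms(2))
  then have "wirtinger_number V H vert alpha sigma \<le> 1"
    unfolding wirtinger_number_def by (rule Least_le)
  then show ?thesis
    using assms(2) unfolding dual_vertices_def by simp
qed

theorem wirtinger_number_le_faces:
  assumes con: "fg_connected V H vert alpha" and plane: "fg_plane V H alpha sigma"
    and red: "fg_reduced V H vert alpha"
  shows "wirtinger_number V H vert alpha sigma \<le> card (dual_vertices H alpha sigma)"
proof (cases "H = {}")
  case False
  then obtain d where "d \<in> H"
    by blast
  have bridgeless: "fg_connected V (H - {d, alpha d}) vert alpha" if "d \<in> H" for d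
    using red that unfolding fg_reduced_def by blast
  obtain S where good: "good_seeds H S"
    using exists_good_seeds[OF con bridgeless \<open>d \<in> H\<close>] by blast
  have V: "V = vert ` H"
    using V_eq_vert_H[OF con \<open>d \<in> H\<close>] .
  have "wirtinger_number V H vert alpha sigma \<le> card S"
    unfolding wirtinger_number_def by (rule Least_le) (rule k_colorable_good_seeds[OF good V])
  also have "\<dots> \<le> card (dual_vertices H alpha sigma)"
    by (rule card_good_seeds_le_faces[OF good V plane])
  finally show ?thesis .
qed (use wirtinger_number_no_edges con in blast)

end

theorem lemma4p5:
  fixes V :: "'v set" and H :: "'d set" and vert :: "'d \<Rightarrow> 'v"
    and alpha sigma :: "'d \<Rightarrow> 'd"
  assumes "fat_graph V H vert alpha sigma"
    and "fg_connected V H vert alpha"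
    and "fg_plane V H alpha sigma"
    and "fg_reduced V H vert alpha"
  shows "wirtinger_number V H vert alpha sigma \<le> card (dual_vertices H alpha sigma)"
proof -
  interpret rotation_system V H vert alpha sigma
    by unfold_locales (rule assms(1))
  show ?thesis
    using wirtinger_number_le_faces assms(2-4) .
qed

end
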